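(* Let $L$ be a finite list, $g: L\to\{0,1\}$ a Boolean function and $\epsilon > 0$, and let $c_q$ be the number of queries to $g$ required to implement the oracle $\mathcal{O}_g|x\rangle|0\rangle = |x\rangle|g(x)\rangle$. Then, with probability of failure at most $\epsilon$, the algorithm $\textbf{QSearch}_{\text{Zalka}}$ requires at most $$W_{\textbf{QSearch}_{\text{Zalka}}}(|L|,\epsilon) := c_q\left(5\left\lceil \frac{\ln(1/\epsilon)}{2\ln(4/3)}\right\rceil + \pi\sqrt{|L|}\sqrt{\left\lceil \frac{\ln(1/\epsilon)}{2\ln(4/3)}\right\rceil}\right)$$ queries to $g$ to find a marked item of $L$ (an $x$ with $g(x)=1$), or otherwise to report that there is none.
   Context: Each use of $\mathcal{O}_g$ counts as $c_q$ queries to $g$. A Grover iteration is the unitary reflecting through the unmarked states (one query to $\mathcal{O}_g$) followed by a reflection through the uniform superposition over $L$; a Grover run with $j$ iterations prepares the uniform superposition, applies $j$ Grover iterations, measures, and checks the outcome with one further query. Exact Grover search for a known number $t>0$ of marked items is a procedure that, when $L$ has exactly $t$ marked items, returns a marked item with certainty using $\lfloor \frac{\pi}{4}\sqrt{|L|/t} - \frac12 \rceil + 1$ queries to $\mathcal{O}_g$ (where $\lfloor\cdot\rceil$ is the nearest integer). Algorithm $\textbf{QSearch}_{\text{Zalka}}$ with target failure probability $\epsilon$: let $t_0 = \lceil \frac{\ln\epsilon}{2\ln(3/4)}\rceil$. Step 1: for $t = 1, 2, \dots, t_0$, run exact Grover search assuming exactly $t$ marked items; if a marked item is found, return it and stop.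 Step 2: repeat $2t_0$ times: choose an integer $j$ uniformly at random from $[0, \lceil \frac{\pi}{4}\sqrt{|L|/t_0}\rceil]$ and perform a Grover run with $j$ iterations; if a marked item is found, return it and stop. If nothing is found, return "no marked item". *)

theory Defs
  imports "HOL-Probability.Probability"
begin

text \<open>A state is an amplitude vector indexed by the elements of L (a function
'a => complex, supported on L).  The uniform superposition over L:\<close>
definition unif_state :: "'a set \<Rightarrow> 'a \<Rightarrow> complex" where
  "unif_state L = (\<lambda>x. if x \<in> L then complex_of_real (1 / sqrt (real (card L))) else 0)"

text \<open>Reflection through the unmarked states (one use of the oracle O_g):
unmarked amplitudes are kept, marked amplitudes change sign.\<close>
definition refl_unmarked :: "('a \<Rightarrow> bool) \<Rightarrow> ('a \<Rightarrow> complex) \<Rightarrow> 'a \<Rightarrow> complex" where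
  "refl_unmarked g v = (\<lambda>x. if g x then - v x else v x)"

definition refl_unif :: "'a set \<Rightarrow> ('a \<Rightarrow> complex) \<Rightarrow> 'a \<Rightarrow> complex" where
  "refl_unif L v = (let u = unif_state L; ip = (\<Sum>y\<in>L. cnj (u y) * v y)
                    in (\<lambda>x. 2 * ip * u x - v x))"

definition grover_iter :: "'a set \<Rightarrow> ('a \<Rightarrow> bool) \<Rightarrow> ('a \<Rightarrow> complex) \<Rightarrow> 'a \<Rightarrow> complex" where
  "grover_iter L g v = refl_unif L (refl_unmarked g v)"

definition measure_state :: "'a set \<Rightarrow> ('a \<Rightarrow> complex) \<Rightarrow> 'a pmf" where
  "measure_state L v = embed_pmf (\<lambda>x. if x \<in> L then (cmod (v x))^2 else 0)"

text \<open>A Grover run with j iterations: prepare the uniform superposition, apply j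
Grover iterations, measure, check the outcome with one further query.  Result:
(found item or None, number of uses of O_g) = j + 1 uses.\<close>
definition grover_run :: "'a set \<Rightarrow> ('a \<Rightarrow> bool) \<Rightarrow> nat \<Rightarrow> ('a option \<times> real) pmf" where
  "grover_run L g j =
     map_pmf (\<lambda>x. (if x \<in> L \<and> g x then Some x else None, real j + 1))
       (measure_state L ((grover_iter L g ^^ j) (unif_state L)))"

text \<open>Number of uses of O_g of exact Grover search assuming t marked items.\<close>
definition exact_cost :: "'a set \<Rightarrow> nat \<Rightarrow> real" where
  "exact_cost L t = real_of_int (round (pi / 4 * sqrt (real (card L) / real t) - 1 / 2)) + 1"

definition zalka_t0 :: "real \<Rightarrow> nat" where
  "zalka_t0 \<epsilon> = nat \<lceil>ln \<epsilon> / (2 * ln (3 / 4))\<rceil>"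

definition add_cost :: "real \<Rightarrow> ('a option \<times> real) \<Rightarrow> ('a option \<times> real)" where
  "add_cost c = (\<lambda>(r, c'). (r, c + c'))"

fun zalka_step2 :: "'a set \<Rightarrow> ('a \<Rightarrow> bool) \<Rightarrow> nat \<Rightarrow> nat \<Rightarrow> ('a option \<times> real) pmf" where
  "zalka_step2 L g t0 0 = return_pmf (None, 0)"
| "zalka_step2 L g t0 (Suc k) =
     bind_pmf (pmf_of_set {0 .. nat \<lceil>pi / 4 * sqrt (real (card L) / real t0)\<rceil>}) (\<lambda>j.
     bind_pmf (grover_run L g j) (\<lambda>(r, c).
       if r \<noteq> None then return_pmf (r, c)
       else map_pmf (add_cost c) (zalka_step2 L g t0 k)))"

text \<open>Step 1: exact Grover searches for t in the given list; EG t is the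
(arbitrary) output distribution of exact Grover search assuming t marked items;
its outcome is checked (the check is part of its query count).\<close>
fun zalka_step1 :: "(nat \<Rightarrow> 'a pmf) \<Rightarrow> 'a set \<Rightarrow> ('a \<Rightarrow> bool) \<Rightarrow> nat list
                     \<Rightarrow> ('a option \<times> real) pmf \<Rightarrow> ('a option \<times> real) pmf" where
  "zalka_step1 EG L g [] rest = rest"
| "zalka_step1 EG L g (t # ts) rest =
     bind_pmf (EG t) (\<lambda>x.
       if x \<in> L \<and> g x then return_pmf (Some x, exact_cost L t)
       else map_pmf (add_cost (exact_cost L t)) (zalka_step1 EG L g ts rest))"

definition qsearch_zalka :: "(nat \<Rightarrow> 'a pmf) \<Rightarrow> 'a set \<Rightarrow> ('a \<Rightarrow> bool) \<Rightarrow> real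
                              \<Rightarrow> ('a option \<times> real) pmf" where
  "qsearch_zalka EG L g \<epsilon> =
     (let t0 = zalka_t0 \<epsilon>
      in zalka_step1 EG L g [1 ..< t0 + 1] (zalka_step2 L g t0 (2 * t0)))"

definition search_correct :: "'a set \<Rightarrow> ('a \<Rightarrow> bool) \<Rightarrow> 'a option \<Rightarrow> bool" where
  "search_correct L g r = (case r of None \<Rightarrow> \<not> (\<exists>x\<in>L. g x) | Some x \<Rightarrow> x \<in> L \<and> g x)"

definition W_zalka :: "real \<Rightarrow> nat \<Rightarrow> real \<Rightarrow> real" where
  "W_zalka cq n \<epsilon> =
     (let T = real (nat \<lceil>ln (1 / \<epsilon>) / (2 * ln (4 / 3))\<rceil>)
      in cq * (5 * T + pi * sqrt (real n) * sqrt T))"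

end

theory Submission
  imports Defs
begin

(* With t of the N items marked, a Grover iteration rotates the span of the uniform
   superpositions over the marked and the unmarked items by 2 theta, where
   sin theta = sqrt (t / N); after j iterations the measurement misses with probability
   cos ((2 j + 1) theta)^2.  If t <= t0, step 1 runs exact Grover search for the right t
   and cannot fail.  Otherwise the largest iteration count M of step 2 satisfies
   (M + 1) sin theta >= pi / 4, and the averaging argument of Boyer, Brassard, Hoyer and
   Tapp bounds the mean of cos ((2 j + 1) theta)^2 over 0 <= j <= M by 3/4; the 2 t0
   independent runs of step 2 all miss with probability at most (3/4)^(2 t0) <= epsilon.
   The queries are bounded by sum_(t <= t0) (pi/4 sqrt (N / t) + 1) <= pi/2 sqrt (N t0) + t0
   in step 1 and by 2 t0 (M + 1) <= pi/2 sqrt (N t0) + 4 t0 in step 2. *)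

lemma jordan_inequality:
  fixes z :: real
  assumes "0 \<le> z" "z \<le> pi / 2"
  shows "2 / pi * z \<le> sin z"
proof -
  have "concave_on {0..pi/2} sin"
    by (rule f''_le0_imp_concave[where f' = cos and f'' = "\<lambda>x. - sin x"])
       (auto intro!: derivative_eq_intros sin_ge_zero)
  from concave_onD[OF this, of "2 / pi * z" 0 "pi / 2"] assms show ?thesis
    by (simp add: field_simps)
qed

lemma cos_odd_mult_pi_half: "cos ((2 * real j + 1) * (pi / 2)) = 0"
  unfolding cos_zero_iff by (intro disjI1 exI[of _ "2 * j + 1"]) auto

lemma sum_cos_odd_mult:
  "2 * sin x * (\<Sum>j<m. cos ((2 * real j + 1) * x)) = sin (2 * real m * x)"
proof (induction m)
  case (Suc m)
  have "2 * sin x * cos ((2 * real m + 1) * x) = sin (2 * real (Suc m) * x) - sin (2 * real m * x)"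
    using sin_diff_sin[of "2 * real (Suc m) * x" "2 * real m * x"]
    by (simp add: algebra_simps add_divide_distrib)
  with Suc show ?case by (simp add: algebra_simps)
qed simp

lemma sum_cos_sq_odd_mult:
  "4 * sin (2 * \<theta>) * (\<Sum>j<m. cos ((2 * real j + 1) * \<theta>)^2)
     = 2 * real m * sin (2 * \<theta>) + sin (4 * real m * \<theta>)"
proof -
  have "(\<Sum>j<m. cos ((2 * real j + 1) * \<theta>)^2) = (\<Sum>j<m. (1 + cos ((2 * real j + 1) * (2 * \<theta>))) / 2)"
  proof (intro sum.cong refl)
    fix j
    have "(2 * real j + 1) * (2 * \<theta>) = 2 * ((2 * real j + 1) * \<theta>)" by simp
    then show "cos ((2 * real j + 1) * \<theta>)^2 = (1 + cos ((2 * real j + 1) * (2 * \<theta>))) / 2"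
      by (simp only: cos_double_cos) simp
  qed
  also have "\<dots> = (real m + (\<Sum>j<m. cos ((2 * real j + 1) * (2 * \<theta>)))) / 2"
    by (simp add: sum.distrib sum_divide_distrib[symmetric])
  finally have "4 * sin (2 * \<theta>) * (\<Sum>j<m. cos ((2 * real j + 1) * \<theta>)^2)
      = 2 * real m * sin (2 * \<theta>) + 2 * sin (2 * \<theta>) * (\<Sum>j<m. cos ((2 * real j + 1) * (2 * \<theta>)))"
    by (simp only:) (simp add: algebra_simps)
  also have "2 * sin (2 * \<theta>) * (\<Sum>j<m. cos ((2 * real j + 1) * (2 * \<theta>))) = sin (4 * real m * \<theta>)"
    using sum_cos_odd_mult[of "2 * \<theta>" m] by (simp add: mult.assoc)
  finally show ?thesis .
qed

lemma sin_mult_le_mult_sin: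
  assumes "0 < \<theta>" "\<theta> < pi / 2" "pi / 4 \<le> real m * sin \<theta>"
  shows "sin (4 * real m * \<theta>) \<le> real m * sin (2 * \<theta>)"
proof (cases "\<theta> \<le> pi / 4")
  case True
  have "1 \<le> 4 / pi * (real m * sin \<theta>)"
    using assms(3) by (simp add: field_simps)
  also have "\<dots> \<le> 4 / pi * (real m * \<theta>)"
    using sin_x_le_x[of \<theta>] assms(1) by (intro mult_left_mono) auto
  also have "\<dots> = real m * (2 / pi * (2 * \<theta>))"
    by simp
  also have "\<dots> \<le> real m * sin (2 * \<theta>)"
    using True assms(1) by (intro mult_left_mono jordan_inequality) auto
  finally show ?thesis using sin_le_one[of "4 * real m * \<theta>"] by linarith
next
  case False
  define y where "y = pi - 2 * \<theta>"
  have y: "0 < y" "y < pi / 2" using False assms(2) by (auto simp: y_def)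
  have "sin (4 * real m * \<theta>) = sin (real (2 * m) * pi - 2 * real m * y)"
    by (simp add: y_def algebra_simps)
  also have "\<dots> = - sin (2 * real m * y)" by (simp add: sin_diff)
  finally have sin_4m: "sin (4 * real m * \<theta>) = - sin (2 * real m * y)" .
  have sin_2: "sin (2 * \<theta>) = sin y" by (simp add: y_def)
  show ?thesis
  proof (cases "2 * real m * y \<le> pi")
    case True
    then have "0 \<le> sin (2 * real m * y)" "0 \<le> real m * sin y"
      using y by (auto intro!: sin_ge_zero mult_nonneg_nonneg)
    then show ?thesis by (simp add: sin_4m sin_2)
  next
    case False
    have "1 \<le> real m * (2 / pi * y)" using False by (simp add: field_simps)
    also have "\<dots> \<le> real m * sin y" using y by (intro mult_left_mono jordan_inequality) auto
    finally have "- sin (2 * real m * y) \<le> real m * sin y"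
      using sin_ge_minus_one[of "2 * real m * y"] by linarith
    then show ?thesis by (simp add: sin_4m sin_2)
  qed
qed

lemma sum_cos_sq_odd_mult_le:
  assumes "0 < \<theta>" "\<theta> \<le> pi / 2" "pi / 4 \<le> real m * sin \<theta>"
  shows "(\<Sum>j<m. cos ((2 * real j + 1) * \<theta>)^2) \<le> 3 / 4 * real m"
proof (cases "\<theta> = pi / 2")
  case True
  then show ?thesis by (simp only: cos_odd_mult_pi_half) simp
next
  case False
  with assms have "0 < sin (2 * \<theta>)" by (intro sin_gt_zero) auto
  moreover have "sin (4 * real m * \<theta>) \<le> real m * sin (2 * \<theta>)"
    using False assms by (intro sin_mult_le_mult_sin) auto
  ultimately have "sin (2 * \<theta>) * (4 * (\<Sum>j<m. cos ((2 * real j + 1) * \<theta>)^2))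
      \<le> sin (2 * \<theta>) * (3 * real m)"
    using sum_cos_sq_odd_mult[of \<theta> m] by (simp add: algebra_simps)
  with \<open>0 < sin (2 * \<theta>)\<close> show ?thesis by simp
qed

lemma sin_reflection_angle: "2 * cos (\<psi> - \<theta>) * sin \<theta> - sin \<psi> = sin (2 * \<theta> - \<psi>)"
  for \<psi> \<theta> :: real
proof -
  have "sin (2 * \<theta> - \<psi>) = sin \<theta> * cos (\<theta> - \<psi>) + cos \<theta> * sin (\<theta> - \<psi>)"
    using sin_add[of \<theta> "\<theta> - \<psi>"] by simp
  moreover have "sin \<psi> = sin \<theta> * cos (\<theta> - \<psi>) - cos \<theta> * sin (\<theta> - \<psi>)"
    using sin_diff[of \<theta> "\<theta> - \<psi>"] by simp
  moreover have "cos (\<psi> - \<theta>) = cos (\<theta> - \<psi>)"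
    by (metis cos_minus minus_diff_eq)
  ultimately show ?thesis by simp
qed

lemma cos_reflection_angle: "2 * cos (\<psi> - \<theta>) * cos \<theta> - cos \<psi> = cos (2 * \<theta> - \<psi>)"
  for \<psi> \<theta> :: real
proof -
  have "cos (2 * \<theta> - \<psi>) = cos \<theta> * cos (\<theta> - \<psi>) - sin \<theta> * sin (\<theta> - \<psi>)"
    using cos_add[of \<theta> "\<theta> - \<psi>"] by simp
  moreover have "cos \<psi> = cos \<theta> * cos (\<theta> - \<psi>) + sin \<theta> * sin (\<theta> - \<psi>)"
    using cos_diff[of \<theta> "\<theta> - \<psi>"] by simp
  moreover have "cos (\<psi> - \<theta>) = cos (\<theta> - \<psi>)"
    by (metis cos_minus minus_diff_eq)
  ultimately show ?thesis by simp
qed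

lemma measure_bind_pmf:
  "measure_pmf.prob (bind_pmf p f) A = (\<integral>x. measure_pmf.prob (f x) A \<partial>p)"
  unfolding measure_pmf_bind
  by (rule measure_pmf.measure_bind)
    (auto simp: space_subprob_algebra intro: measure_pmf.subprob_space_axioms)

lemma prob_bind_pmf_le:
  assumes "\<And>x. x \<in> set_pmf p \<Longrightarrow> measure_pmf.prob (f x) A \<le> c"
  shows "measure_pmf.prob (bind_pmf p f) A \<le> c"
  unfolding measure_bind_pmf
  using assms by (intro measure_pmf.integral_le_const measure_pmf.integrable_const_bound[where B = 1])
    (auto intro!: AE_pmfI)

lemma prob_measure_state:
  assumes "finite L" and "(\<Sum>x\<in>L. cmod (v x)^2) = 1"
  shows "measure_pmf.prob (measure_state L v) A = (\<Sum>x\<in>L \<inter> A. cmod (v x)^2)"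
proof -
  define f where "f = (\<lambda>x. if x \<in> L then cmod (v x)^2 else 0)"
  have f_nonneg: "0 \<le> f x" for x by (simp add: f_def)
  have "(\<integral>\<^sup>+x. ennreal (f x) \<partial>count_space UNIV) = ennreal (\<Sum>x\<in>L. f x)"
    using assms(1) by (subst nn_integral_count_space') (auto simp: f_def)
  also have "(\<Sum>x\<in>L. f x) = 1" using assms(2) by (simp add: f_def)
  finally have f_sum: "(\<integral>\<^sup>+x. ennreal (f x) \<partial>count_space UNIV) = 1" by simp
  have "measure_state L v = embed_pmf f" by (simp add: measure_state_def f_def)
  then have pmf: "pmf (measure_state L v) x = f x" for x
    by (simp add: pmf_embed_pmf[OF f_nonneg f_sum])
  have "set_pmf (measure_state L v) \<subseteq> L"
    by (auto simp: set_pmf_iff pmf f_def split: if_splits)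
  then have "A \<inter> set_pmf (measure_state L v) = (L \<inter> A) \<inter> set_pmf (measure_state L v)"
    by blast
  then have "measure_pmf.prob (measure_state L v) A = measure_pmf.prob (measure_state L v) (L \<inter> A)"
    by (metis measure_Int_set_pmf)
  also have "\<dots> = (\<Sum>x\<in>L \<inter> A. f x)"
    using assms(1) by (simp add: measure_measure_pmf_finite pmf)
  finally show ?thesis by (simp add: f_def)
qed

abbreviation nothing_found :: "('a option \<times> real) set" where
  "nothing_found \<equiv> {(r, c). r = None}"

locale grover_search =
  fixes L :: "'a set" and g :: "'a \<Rightarrow> bool"
  assumes finite_L: "finite L" and marked_nonempty: "\<exists>x\<in>L. g x"
begin

abbreviation "marked \<equiv> {x \<in> L. g x}"
abbreviation "unmarked \<equiv> {x \<in> L. \<not> g x}"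

definition \<theta> :: real where
  "\<theta> = arcsin (sqrt (card marked / card L))"

(* Amplitudes of cos phi |unmarked> + sin phi |marked>.  When every item is marked,
   theta = pi / 2 and the junk value cos phi / sqrt 0 = 0 is harmless along the orbit
   of the uniform state (see unmarked_mass). *)
definition amplitude :: "real \<Rightarrow> 'a \<Rightarrow> real" where
  "amplitude \<phi> x = (if x \<notin> L then 0
     else if g x then sin \<phi> / sqrt (card marked) else cos \<phi> / sqrt (card unmarked))"

definition state :: "real \<Rightarrow> 'a \<Rightarrow> complex" where
  "state \<phi> x = complex_of_real (amplitude \<phi> x)"

lemma card_L: "card L = card marked + card unmarked"
  using finite_L by (subst card_Un_disjoint[symmetric]) (auto intro: arg_cong[where f = card])

lemma card_marked_pos: "0 < card marked"
  using finite_L marked_nonempty by (auto simp: card_gt_0_iff)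

lemma sum_if_marked:
  "(\<Sum>x\<in>L. if g x then a else b) = of_nat (card marked) * a + of_nat (card unmarked) * (b :: 'b :: comm_semiring_1)"
  using finite_L by (simp add: sum.If_cases Int_def conj_commute)

lemma sqrt_marked_ratio: "0 < sqrt (card marked / card L)" "sqrt (card marked / card L) \<le> 1"
  using card_marked_pos card_L by auto

lemma sin_theta: "sin \<theta> = sqrt (card marked / card L)"
  unfolding \<theta>_def by (rule sin_arcsin) (use sqrt_marked_ratio in linarith)+

lemma cos_theta: "cos \<theta> = sqrt (card unmarked / card L)"
proof -
  have "cos \<theta> = sqrt (1 - sqrt (card marked / card L)^2)"
    unfolding \<theta>_def by (rule cos_arcsin) (use sqrt_marked_ratio in linarith)+
  also have "1 - sqrt (card marked / card L)^2 = card unmarked / card L"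
    using card_L card_marked_pos by (simp add: field_simps)
  finally show ?thesis .
qed

lemma theta_pos: "0 < \<theta>"
  using sqrt_marked_ratio arcsin_less_arcsin[of 0 "sqrt (card marked / card L)"]
  by (simp add: \<theta>_def)

lemma theta_le_pi_half: "\<theta> \<le> pi / 2"
  unfolding \<theta>_def by (rule arcsin_ubound) (use sqrt_marked_ratio in linarith)+

lemma amplitude_sq:
  "amplitude \<phi> x ^ 2 = (if x \<notin> L then 0
     else if g x then sin \<phi> ^ 2 / card marked else cos \<phi> ^ 2 / card unmarked)"
  by (simp add: amplitude_def power_divide)

lemma amplitude_mult:
  "amplitude \<phi> x * amplitude \<psi> x = (if x \<notin> L then 0
     else if g x then sin \<phi> * sin \<psi> / card marked else cos \<phi> * cos \<psi> / card unmarked)"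
  by (simp add: amplitude_def)

lemma unif_state_eq_state: "unif_state L = state \<theta>"
proof
  fix x
  show "unif_state L x = state \<theta> x"
  proof (cases "x \<in> L")
    case True
    then have "0 < card unmarked" if "\<not> g x"
      using that finite_L by (auto simp: card_gt_0_iff)
    with True card_marked_pos show ?thesis
      by (auto simp: unif_state_def state_def amplitude_def sin_theta cos_theta real_sqrt_divide)
  qed (simp add: unif_state_def state_def amplitude_def)
qed

lemma refl_unmarked_state: "refl_unmarked g (state \<phi>) = state (- \<phi>)"
  by (auto simp: refl_unmarked_def state_def amplitude_def)

lemma inner_unif_state: "(\<Sum>y\<in>L. cnj (unif_state L y) * state \<psi> y) = cos (\<psi> - \<theta>)"
proof -
  have "(\<Sum>y\<in>L. cnj (unif_state L y) * state \<psi> y) = complex_of_real (\<Sum>y\<in>L. amplitude \<theta> y * amplitude \<psi> y)"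
    by (simp add: unif_state_eq_state state_def)
  also have "(\<Sum>y\<in>L. amplitude \<theta> y * amplitude \<psi> y) = sin \<theta> * sin \<psi> + cos \<theta> * cos \<psi>"
    using card_marked_pos by (auto simp: amplitude_mult sum_if_marked cos_theta cong: sum.cong)
  finally show ?thesis by (simp add: cos_diff)
qed

lemma amplitude_reflection:
  "2 * cos (\<psi> - \<theta>) * amplitude \<theta> x - amplitude \<psi> x = amplitude (2 * \<theta> - \<psi>) x"
proof -
  have "2 * c * (a / s) - b / s = (2 * c * a - b) / s" for a b c s :: real
    by (simp add: diff_divide_distrib)
  then show ?thesis
    by (simp only: amplitude_def) (simp add: sin_reflection_angle cos_reflection_angle)
qed

lemma refl_unif_state: "refl_unif L (state \<psi>) = state (2 * \<theta> - \<psi>)"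
proof
  fix x
  have "refl_unif L (state \<psi>) x = 2 * cos (\<psi> - \<theta>) * state \<theta> x - state \<psi> x"
    unfolding refl_unif_def Let_def inner_unif_state by (simp add: unif_state_eq_state)
  then show "refl_unif L (state \<psi>) x = state (2 * \<theta> - \<psi>) x"
    by (simp only: state_def flip: amplitude_reflection) simp
qed

lemma grover_iter_state: "grover_iter L g (state \<phi>) = state (\<phi> + 2 * \<theta>)"
  by (simp add: grover_iter_def refl_unmarked_state refl_unif_state add.commute)

lemma grover_iterates_unif: "(grover_iter L g ^^ j) (unif_state L) = state ((2 * real j + 1) * \<theta>)"
  by (induction j) (simp_all add: unif_state_eq_state grover_iter_state algebra_simps)

lemma unmarked_mass:
  "card unmarked * (cos ((2 * real j + 1) * \<theta>)^2 / card unmarked) = cos ((2 * real j + 1) * \<theta>)^2"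
proof (cases "card unmarked = 0")
  case True
  then have "cos \<theta> = 0" by (simp add: cos_theta)
  then have "\<theta> = pi / 2"
    using theta_pos theta_le_pi_half cos_gt_zero_pi[of \<theta>] by fastforce
  then have "cos ((2 * real j + 1) * \<theta>) = 0"
    by (simp only: cos_odd_mult_pi_half)
  with True show ?thesis by simp
qed simp

lemma prob_grover_run_nothing_found:
  "measure_pmf.prob (grover_run L g j) nothing_found = cos ((2 * real j + 1) * \<theta>)^2"
proof -
  define \<phi> where "\<phi> = (2 * real j + 1) * \<theta>"
  have cmod_state: "cmod (state \<phi> x)^2 = amplitude \<phi> x ^ 2" for x
    by (simp add: state_def)
  have "(\<Sum>x\<in>L. cmod (state \<phi> x)^2) = sin \<phi>^2 + cos \<phi>^2"
    using card_marked_pos unmarked_mass[of j, folded \<phi>_def]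
    by (simp add: cmod_state amplitude_sq sum_if_marked cong: sum.cong)
  then have norm: "(\<Sum>x\<in>L. cmod (state \<phi> x)^2) = 1" by simp
  have "measure_pmf.prob (grover_run L g j) nothing_found
      = measure_pmf.prob (measure_state L (state \<phi>)) {x. \<not> (x \<in> L \<and> g x)}"
    by (simp add: grover_run_def grover_iterates_unif \<phi>_def vimage_def)
  also have "\<dots> = (\<Sum>x\<in>L. if g x then 0 else cos \<phi>^2 / card unmarked)"
    unfolding prob_measure_state[OF finite_L norm] sum.inter_restrict[OF finite_L]
    by (intro sum.cong) (auto simp: cmod_state amplitude_sq)
  also have "\<dots> = cos \<phi>^2"
    using unmarked_mass[of j, folded \<phi>_def] by (simp add: sum_if_marked)
  finally show ?thesis by (simp add: \<phi>_def)
qed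

lemma sum_prob_grover_run_nothing_found_le:
  assumes "pi / 4 * sqrt (card L / card marked) \<le> real m"
  shows "(\<Sum>j<m. measure_pmf.prob (grover_run L g j) nothing_found) \<le> 3 / 4 * real m"
  unfolding prob_grover_run_nothing_found
proof (rule sum_cos_sq_odd_mult_le[OF theta_pos theta_le_pi_half])
  have "pi / 4 = pi / 4 * sqrt (card L / card marked) * sin \<theta>"
    using card_marked_pos card_L by (simp add: sin_theta real_sqrt_divide)
  also have "\<dots> \<le> real m * sin \<theta>"
    using assms sqrt_marked_ratio by (intro mult_right_mono) (auto simp: sin_theta)
  finally show "pi / 4 \<le> real m * sin \<theta>" .
qed

end

lemma prob_map_add_cost_nothing_found [simp]:
  "measure_pmf.prob (map_pmf (add_cost c) p) nothing_found = measure_pmf.prob p nothing_found"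
proof -
  have "add_cost c -` nothing_found = nothing_found"
    by (auto simp: add_cost_def)
  then show ?thesis unfolding measure_map_pmf by (rule arg_cong)
qed

definition zalka_max_iter :: "'a set \<Rightarrow> nat \<Rightarrow> nat" where
  "zalka_max_iter L t0 = nat \<lceil>pi / 4 * sqrt (real (card L) / real t0)\<rceil>"

lemmas zalka_step2_Suc = zalka_step2.simps(2)[folded zalka_max_iter_def]

lemma prob_zalka_step2_nothing_found:
  fixes L :: "'a set" and t0 :: nat
  defines "M \<equiv> zalka_max_iter L t0"
  shows "measure_pmf.prob (zalka_step2 L g t0 k) nothing_found
    = ((\<Sum>j\<in>{0..M}. measure_pmf.prob (grover_run L g j) nothing_found) / (M + 1)) ^ k"
proof (induction k)
  case (Suc k)
  let ?P = "measure_pmf.prob (zalka_step2 L g t0 k) nothing_found"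
  have run: "measure_pmf.prob (grover_run L g j \<bind> (\<lambda>(r, c). if r \<noteq> None then return_pmf (r, c)
        else map_pmf (add_cost c) (zalka_step2 L g t0 k))) nothing_found
      = measure_pmf.prob (grover_run L g j) nothing_found * ?P" for j
  proof -
    have "measure_pmf.prob (grover_run L g j \<bind> (\<lambda>(r, c). if r \<noteq> None then return_pmf (r, c)
        else map_pmf (add_cost c) (zalka_step2 L g t0 k))) nothing_found
      = (\<integral>x. indicator nothing_found x * ?P \<partial>grover_run L g j)"
      unfolding measure_bind_pmf
      by (intro Bochner_Integration.integral_cong) (auto simp del: measure_map_pmf split: prod.split)
    also have "\<dots> = measure_pmf.prob (grover_run L g j) nothing_found * ?P"
      by simp
    finally show ?thesis .
  qed
  have "measure_pmf.prob (zalka_step2 L g t0 (Suc k)) nothing_found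
      = (\<integral>j. measure_pmf.prob (grover_run L g j) nothing_found \<partial>pmf_of_set {0..M}) * ?P"
    unfolding zalka_step2_Suc M_def[symmetric]
    by (subst measure_bind_pmf) (simp only: run integral_mult_left_zero)
  also have "(\<integral>j. measure_pmf.prob (grover_run L g j) nothing_found \<partial>pmf_of_set {0..M})
      = (\<Sum>j\<in>{0..M}. measure_pmf.prob (grover_run L g j) nothing_found) / (M + 1)"
    by (subst integral_pmf_of_set) auto
  finally show ?case
    by (simp add: Suc.IH mult.commute)
qed simp

lemma (in grover_search) prob_zalka_step2_nothing_found_le:
  assumes "1 \<le> t0" and "t0 < card marked"
  shows "measure_pmf.prob (zalka_step2 L g t0 k) nothing_found \<le> (3 / 4) ^ k"
proof -
  define M where "M = zalka_max_iter L t0"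
  have "pi / 4 * sqrt (card L / card marked) \<le> pi / 4 * sqrt (card L / t0)"
    using assms by (auto intro!: divide_left_mono)
  also have "\<dots> \<le> real (M + 1)"
    unfolding M_def zalka_max_iter_def by linarith
  finally have "(\<Sum>j<M + 1. measure_pmf.prob (grover_run L g j) nothing_found) \<le> 3 / 4 * real (M + 1)"
    by (rule sum_prob_grover_run_nothing_found_le)
  moreover have "{0..M} = {..<M + 1}" by auto
  ultimately have "(\<Sum>j\<in>{0..M}. measure_pmf.prob (grover_run L g j) nothing_found) / (M + 1) \<le> 3 / 4"
    by (simp add: field_simps)
  then show ?thesis
    unfolding M_def prob_zalka_step2_nothing_found
    by (intro power_mono) (auto intro!: divide_nonneg_nonneg sum_nonneg)
qed

lemma grover_run_outcome:
  "(r, c) \<in> set_pmf (grover_run L g j) \<Longrightarrow> pred_option (\<lambda>x. x \<in> L \<and> g x) r \<and> c = real j + 1"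
  by (auto simp: grover_run_def)

lemma zalka_step2_outcome:
  "(r, c) \<in> set_pmf (zalka_step2 L g t0 k)
    \<Longrightarrow> pred_option (\<lambda>x. x \<in> L \<and> g x) r \<and> c \<le> real k * (zalka_max_iter L t0 + 1)"
proof (induction k arbitrary: r c)
  case (Suc k)
  then obtain j r' c' where j: "j \<le> zalka_max_iter L t0" and run: "(r', c') \<in> set_pmf (grover_run L g j)"
    and rc: "(r, c) \<in> set_pmf (if r' \<noteq> None then return_pmf (r', c')
                                   else map_pmf (add_cost c') (zalka_step2 L g t0 k))"
    unfolding zalka_step2_Suc by auto
  have r': "pred_option (\<lambda>x. x \<in> L \<and> g x) r'" and c': "c' \<le> zalka_max_iter L t0 + 1"
    using grover_run_outcome[OF run] j by auto
  show ?case
  proof (cases r')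
    case None
    with rc obtain c'' where "(r, c'') \<in> set_pmf (zalka_step2 L g t0 k)" and "c = c' + c''"
      by (auto simp: add_cost_def)
    with Suc.IH c' show ?thesis by (fastforce simp: algebra_simps)
  next
    case (Some x)
    with rc r' c' show ?thesis by (auto intro: order_trans[OF _ mult_right_mono[of 1]])
  qed
qed simp

lemma exact_cost_nonneg: "0 \<le> exact_cost L t"
proof -
  have "0 \<le> pi / 4 * sqrt (card L / t)" by simp
  with of_int_round_ge[of "pi / 4 * sqrt (card L / t) - 1 / 2"] show ?thesis
    unfolding exact_cost_def by linarith
qed

lemma exact_cost_le: "exact_cost L t \<le> pi / 4 * sqrt (card L / t) + 1"
  using of_int_round_le[of "pi / 4 * sqrt (card L / t) - 1 / 2"] by (simp add: exact_cost_def)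

lemma zalka_step1_outcome:
  assumes rest: "\<And>r c. (r, c) \<in> set_pmf rest \<Longrightarrow> pred_option (\<lambda>x. x \<in> L \<and> g x) r \<and> c \<le> B"
    and "0 \<le> B"
  shows "(r, c) \<in> set_pmf (zalka_step1 EG L g ts rest)
    \<Longrightarrow> pred_option (\<lambda>x. x \<in> L \<and> g x) r \<and> c \<le> sum_list (map (exact_cost L) ts) + B"
proof (induction ts arbitrary: r c)
  case (Cons t ts)
  have "0 \<le> sum_list (map (exact_cost L) ts)"
    by (intro sum_list_nonneg) (auto simp: exact_cost_nonneg)
  with Cons \<open>0 \<le> B\<close> show ?case
    by (fastforce simp: add_cost_def split: if_splits)
qed (use rest in simp)

lemma zalka_step1_finds:
  assumes "t \<in> set ts" and "\<forall>x \<in> set_pmf (EG t). x \<in> L \<and> g x"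
  shows "(r, c) \<in> set_pmf (zalka_step1 EG L g ts rest) \<Longrightarrow> r \<noteq> None"
  using assms(1)
proof (induction ts arbitrary: r c)
  case (Cons t' ts)
  with assms(2) show ?case
    by (fastforce simp: add_cost_def split: if_splits)
qed simp

lemma prob_zalka_step1_nothing_found_le:
  "measure_pmf.prob (zalka_step1 EG L g ts rest) nothing_found \<le> measure_pmf.prob rest nothing_found"
proof (induction ts)
  case (Cons t ts)
  then show ?case
    by (simp, intro prob_bind_pmf_le) (simp del: measure_map_pmf)
qed simp

lemma sum_inverse_sqrt_le: "(\<Sum>t = 1..T. 1 / sqrt (real t)) \<le> 2 * sqrt (real T)"
proof (induction T)
  case (Suc T)
  have "sqrt T * sqrt (Suc T) \<le> (real T + real (Suc T)) / 2"
    using arith_geo_mean_sqrt[of "real T" "real (Suc T)"] unfolding real_sqrt_mult by simp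
  moreover have "sqrt (Suc T) * sqrt (Suc T) = Suc T" by simp
  ultimately have "1 / sqrt (Suc T) \<le> 2 * sqrt (Suc T) - 2 * sqrt T"
    by (simp add: field_simps)
  with Suc.IH show ?case by simp
qed simp

lemma zalka_step1_cost_le:
  "sum_list (map (exact_cost L) [1..<t0 + 1]) \<le> pi / 2 * sqrt (card L) * sqrt t0 + t0"
proof -
  have "sum_list (map (exact_cost L) [1..<t0 + 1]) = (\<Sum>t = 1..t0. exact_cost L t)"
    by (simp only: interv_sum_list_conv_sum_set_nat set_upt Suc_eq_plus1[symmetric]
        atLeastLessThanSuc_atLeastAtMost)
  also have "\<dots> \<le> (\<Sum>t = 1..t0. pi / 4 * sqrt (card L) * (1 / sqrt t) + 1)"
    by (intro sum_mono order_trans[OF exact_cost_le]) (simp add: real_sqrt_divide)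
  also have "\<dots> = pi / 4 * sqrt (card L) * (\<Sum>t = 1..t0. 1 / sqrt t) + t0"
    by (simp add: sum.distrib sum_distrib_left)
  also have "\<dots> \<le> pi / 4 * sqrt (card L) * (2 * sqrt t0) + t0"
    by (intro add_right_mono mult_left_mono sum_inverse_sqrt_le) auto
  also have "\<dots> = pi / 2 * sqrt (card L) * sqrt t0 + t0"
    by simp
  finally show ?thesis .
qed

lemma zalka_step2_cost_le:
  "real (2 * t0) * (zalka_max_iter L t0 + 1) \<le> pi / 2 * sqrt (card L) * sqrt t0 + 4 * t0"
proof -
  have "0 \<le> pi / 4 * sqrt (card L / t0)" by simp
  then have "real (zalka_max_iter L t0) \<le> pi / 4 * sqrt (card L / t0) + 1"
    unfolding zalka_max_iter_def by linarith
  then have "real (2 * t0) * (zalka_max_iter L t0 + 1) \<le> real (2 * t0) * (pi / 4 * sqrt (card L / t0) + 2)"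
    by (intro mult_left_mono) auto
  also have "\<dots> = pi / 2 * sqrt (card L) * (t0 / sqrt t0) + 4 * t0"
    by (simp add: real_sqrt_divide field_simps)
  finally show ?thesis by (simp add: real_div_sqrt)
qed

lemma W_zalka_eq:
  assumes "0 < \<epsilon>"
  shows "W_zalka c n \<epsilon> = c * (5 * zalka_t0 \<epsilon> + pi * sqrt n * sqrt (zalka_t0 \<epsilon>))"
proof -
  have "ln (1 / \<epsilon>) = - ln \<epsilon>" "ln (4 / 3 :: real) = - ln (3 / 4)"
    using assms by (simp_all add: ln_div)
  then have "ln (1 / \<epsilon>) / (2 * ln (4 / 3)) = ln \<epsilon> / (2 * ln (3 / 4))"
    by simp
  then show ?thesis by (simp add: W_zalka_def zalka_t0_def Let_def)
qed

lemma zalka_t0_ge_1: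
  assumes "0 < \<epsilon>" "\<epsilon> < 1"
  shows "1 \<le> zalka_t0 \<epsilon>"
proof -
  have "0 < ln \<epsilon> / (2 * ln (3 / 4))"
    using assms by (intro divide_neg_neg) auto
  then show ?thesis unfolding zalka_t0_def by linarith
qed

lemma three_quarters_pow_zalka_t0_le:
  assumes "0 < \<epsilon>"
  shows "(3 / 4) ^ (2 * zalka_t0 \<epsilon>) \<le> \<epsilon>"
proof -
  have "ln \<epsilon> / (2 * ln (3 / 4)) \<le> zalka_t0 \<epsilon>"
    unfolding zalka_t0_def by linarith
  then have "ln \<epsilon> \<ge> real (2 * zalka_t0 \<epsilon>) * ln (3 / 4)"
    by (simp add: divide_le_eq mult.commute)
  then have "ln ((3 / 4) ^ (2 * zalka_t0 \<epsilon>)) \<le> ln \<epsilon>"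
    by (simp add: ln_realpow)
  with assms show ?thesis by simp
qed

lemma qsearch_zalka_outcome:
  assumes "(r, c) \<in> set_pmf (qsearch_zalka EG L g \<epsilon>)"
  shows "pred_option (\<lambda>x. x \<in> L \<and> g x) r
    \<and> c \<le> 5 * zalka_t0 \<epsilon> + pi * sqrt (card L) * sqrt (zalka_t0 \<epsilon>)"
proof -
  let ?t0 = "zalka_t0 \<epsilon>"
  have "pred_option (\<lambda>x. x \<in> L \<and> g x) r
      \<and> c \<le> sum_list (map (exact_cost L) [1..<?t0 + 1]) + real (2 * ?t0) * (zalka_max_iter L ?t0 + 1)"
    using assms unfolding qsearch_zalka_def Let_def
    by (intro zalka_step1_outcome) (auto dest: zalka_step2_outcome)
  with zalka_step1_cost_le[of L ?t0] zalka_step2_cost_le[of ?t0 L] show ?thesis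
    by linarith
qed

lemma prob_qsearch_zalka_nothing_found_le:
  assumes "finite L" and "0 < \<epsilon>" and "\<exists>x\<in>L. g x"
    and exact_grover: "\<forall>x \<in> set_pmf (EG (card {x \<in> L. g x})). x \<in> L \<and> g x"
  shows "measure_pmf.prob (qsearch_zalka EG L g \<epsilon>) nothing_found \<le> \<epsilon>"
proof -
  interpret grover_search L g
    using assms by unfold_locales
  define t0 where "t0 = zalka_t0 \<epsilon>"
  have Q: "qsearch_zalka EG L g \<epsilon> = zalka_step1 EG L g [1..<t0 + 1] (zalka_step2 L g t0 (2 * t0))"
    unfolding qsearch_zalka_def Let_def t0_def ..
  consider "card marked \<le> t0" | "1 \<le> \<epsilon>" | "t0 < card marked" "\<epsilon> < 1"
    by linarith
  then show ?thesis
  proof cases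
    case 1
    with card_marked_pos have "card marked \<in> set [1..<t0 + 1]" by auto
    from zalka_step1_finds[where EG = EG, OF this exact_grover]
    have "set_pmf (qsearch_zalka EG L g \<epsilon>) \<inter> nothing_found = {}"
      unfolding Q by fastforce
    with assms(2) show ?thesis
      by (simp flip: measure_pmf_zero_iff)
  next
    case 2
    then show ?thesis using measure_pmf.prob_le_1 order_trans by blast
  next
    case 3
    have "measure_pmf.prob (qsearch_zalka EG L g \<epsilon>) nothing_found
        \<le> measure_pmf.prob (zalka_step2 L g t0 (2 * t0)) nothing_found"
      unfolding Q by (rule prob_zalka_step1_nothing_found_le)
    also have "\<dots> \<le> (3 / 4) ^ (2 * t0)"
      using 3 zalka_t0_ge_1[OF assms(2)] by (intro prob_zalka_step2_nothing_found_le) (auto simp: t0_def)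
    also have "\<dots> \<le> \<epsilon>"
      unfolding t0_def using assms(2) by (rule three_quarters_pow_zalka_t0_le)
    finally show ?thesis .
  qed
qed

lemma prob_not_search_correct_le:
  assumes "\<And>r c. (r, c) \<in> set_pmf p \<Longrightarrow> pred_option (\<lambda>x. x \<in> L \<and> g x) r"
  shows "measure_pmf.prob p {(r, c). \<not> search_correct L g r}
    \<le> (if \<exists>x\<in>L. g x then measure_pmf.prob p nothing_found else 0)"
proof -
  have "{(r, c). \<not> search_correct L g r} \<inter> set_pmf p \<subseteq> (if \<exists>x\<in>L. g x then nothing_found else {})"
  proof clarify
    fix r c
    assume "(r, c) \<in> set_pmf p" and "\<not> search_correct L g r"
    with assms[of r c] show "(r, c) \<in> (if \<exists>x\<in>L. g x then nothing_found else {})"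
      by (cases r) (auto simp: search_correct_def)
  qed
  then have "measure_pmf.prob p {(r, c). \<not> search_correct L g r}
      \<le> measure_pmf.prob p (if \<exists>x\<in>L. g x then nothing_found else {})"
    unfolding measure_Int_set_pmf[symmetric, of p "{(r, c). \<not> search_correct L g r}"]
    by (rule measure_pmf.finite_measure_mono) simp
  then show ?thesis by (cases "\<exists>x\<in>L. g x") simp_all
qed

theorem lemma5:
  fixes L :: "'a set" and g :: "'a \<Rightarrow> bool" and \<epsilon> :: real and c_q :: real
    and EG :: "nat \<Rightarrow> 'a pmf"
  assumes "finite L" and "\<epsilon> > 0" and "c_q \<ge> 0"
    and exact_grover: "\<And>t. t > 0 \<Longrightarrow> card {x \<in> L. g x} = t \<Longrightarrow>
                          \<forall>x \<in> set_pmf (EG t). x \<in> L \<and> g x"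
  shows "(\<forall>(r, c) \<in> set_pmf (qsearch_zalka EG L g \<epsilon>). c_q * c \<le> W_zalka c_q (card L) \<epsilon>)
       \<and> measure_pmf.prob (qsearch_zalka EG L g \<epsilon>)
           {(r, c). \<not> search_correct L g r} \<le> \<epsilon>"
proof -
  let ?Q = "qsearch_zalka EG L g \<epsilon>"
  note outcome = qsearch_zalka_outcome[of _ _ EG L g \<epsilon>]
  have cost: "\<forall>(r, c) \<in> set_pmf ?Q. c_q * c \<le> W_zalka c_q (card L) \<epsilon>"
  proof clarify
    fix r c
    assume "(r, c) \<in> set_pmf ?Q"
    with outcome[of r c] \<open>c_q \<ge> 0\<close> show "c_q * c \<le> W_zalka c_q (card L) \<epsilon>"
      unfolding W_zalka_eq[OF \<open>\<epsilon> > 0\<close>] by (simp add: mult_left_mono)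
  qed
  have "measure_pmf.prob ?Q {(r, c). \<not> search_correct L g r}
      \<le> (if \<exists>x\<in>L. g x then measure_pmf.prob ?Q nothing_found else 0)"
    using outcome by (intro prob_not_search_correct_le) blast
  also have "\<dots> \<le> \<epsilon>"
  proof (cases "\<exists>x\<in>L. g x")
    case True
    with \<open>finite L\<close> have "card {x \<in> L. g x} > 0" by (auto simp: card_gt_0_iff)
    with True show ?thesis
      using prob_qsearch_zalka_nothing_found_le[OF \<open>finite L\<close> \<open>\<epsilon> > 0\<close> True exact_grover] by simp
  qed (use \<open>\<epsilon> > 0\<close> in simp)
  finally show ?thesis using cost by blast
qed

end
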